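(* Let $H$ be an NCI-hypergraph and let $e=\{x_1,\dots,x_n\}$ be a hyperedge of $H$. Then $N(x_1)=N(x_2)=\dots=N(x_n)$.
   Context: A simple hypergraph is a pair $H=(V,E)$, $V$ finite, $E\subseteq 2^V$, assumed minimal (no edge properly contains another); $2$-element edges are called edges and $k$-edges with $k\ge 3$ are called hyperedges. For $v\in V$, $N(v)=\{w:\{v,w\}\in E\}$ is its set of $2$-neighbors. The edge ideal $I(H)$ is the squarefree monomial ideal in $k[V]$ ($k$ a field) generated by $\prod_{v\in e}v$, $e\in E$. A nearly complete intersection is a squarefree monomial ideal $I$ that is not a complete intersection such that for every variable $x$ in the support of $I$, $I(x=1)$ (substituting $x=1$ in the generators) is a complete intersection. $H$ is an NCI-hypergraph if $I(H)$ is a nearly complete intersection. *)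

theory Defs
  imports Main
begin

(* A simple hypergraph (V,E): V finite, E a family of subsets of V, each edge has at
   least 2 elements (2-edges are "edges", k-edges with k>=3 are "hyperedges"),
   and E is a clutter (no edge properly contains another). *)
definition simple_hypergraph :: "'a set \<Rightarrow> 'a set set \<Rightarrow> bool" where
  "simple_hypergraph V E \<longleftrightarrow> finite V \<and> (\<forall>e\<in>E. e \<subseteq> V \<and> card e \<ge> 2)
     \<and> (\<forall>e\<in>E. \<forall>f\<in>E. \<not> f \<subset> e)"

definition nbrs :: "'a set set \<Rightarrow> 'a \<Rightarrow> 'a set" where
  "nbrs E v = {w. {v, w} \<in> E}"

(* A squarefree monomial ideal is represented by a finite family of supports of a
   monomial generating set: the set A stands for the monomial prod_{v in A} v. *)
definition minimal_sets :: "'a set set \<Rightarrow> 'a set set" where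
  "minimal_sets F = {A \<in> F. \<not> (\<exists>B\<in>F. B \<subset> A)}"

(* A squarefree monomial ideal is a complete intersection iff its minimal monomial
   generators have pairwise disjoint supports (pairwise coprime). *)
definition monomial_ci :: "'a set set \<Rightarrow> bool" where
  "monomial_ci F \<longleftrightarrow> pairwise disjnt (minimal_sets F)"

definition ideal_support :: "'a set set \<Rightarrow> 'a set" where
  "ideal_support F = \<Union>F"

(* I(x=1): substitute x = 1 in the generators *)
definition subst_one :: "'a set set \<Rightarrow> 'a \<Rightarrow> 'a set set" where
  "subst_one F x = (\<lambda>A. A - {x}) ` F"

definition nearly_ci :: "'a set set \<Rightarrow> bool" where
  "nearly_ci F \<longleftrightarrow> \<not> monomial_ci F \<and> (\<forall>x\<in>ideal_support F. monomial_ci (subst_one F x))"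

definition NCI_hypergraph :: "'a set \<Rightarrow> 'a set set \<Rightarrow> bool" where
  "NCI_hypergraph V E \<longleftrightarrow> simple_hypergraph V E \<and> nearly_ci E"

end

theory Submission
  imports Defs
begin

text \<open>Fix distinct \<open>x, y\<close> in the hyperedge \<open>e\<close> and a 2-neighbour \<open>w\<close> of \<open>x\<close>.
  In \<open>I(y=1)\<close> the generator \<open>e - {y}\<close> is still minimal, because \<open>E\<close> is a clutter.
  If \<open>{y, w}\<close> were not an edge, then \<open>{x, w}\<close> would also stay minimal: the only
  generators that could shrink below it are \<open>{y}\<close>, \<open>{x, y}\<close> and \<open>{y, w}\<close>, and the first
  two are excluded by the edge size and the clutter property. Both minimal generators
  contain \<open>x\<close>, contradicting that \<open>I(y=1)\<close> is a complete intersection.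
  Hence \<open>N(x) \<subseteq> N(y)\<close>, and equality follows by symmetry.\<close>

lemma card_pair_le_two: "card {a, b} \<le> 2"
  by (simp add: card_insert_le_m1)

lemma card_ge_two_subset_pair_eq:
  assumes "B \<subseteq> {a, b}" "card B \<ge> 2"
  shows "B = {a, b}"
proof (rule card_seteq)
  show "card {a, b} \<le> card B" using assms(2) card_pair_le_two[of a b] by linarith
qed (use assms(1) in simp_all)

definition clutter :: "'a set set \<Rightarrow> bool" where
  "clutter E \<longleftrightarrow> (\<forall>e\<in>E. \<forall>f\<in>E. \<not> f \<subset> e)"

lemma clutter_smaller_subset_not_mem:
  assumes "clutter E" "e \<in> E" "f \<subseteq> e" "card f < card e"
  shows "f \<notin> E"
  using assms unfolding clutter_def by blast

lemma simple_hypergraph_clutter: "simple_hypergraph V E \<Longrightarrow> clutter E"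
  unfolding simple_hypergraph_def clutter_def by blast

lemma simple_hypergraph_card_edge: "simple_hypergraph V E \<Longrightarrow> f \<in> E \<Longrightarrow> card f \<ge> 2"
  unfolding simple_hypergraph_def by blast

lemma monomial_ci_minimal_sets_eq:
  assumes "monomial_ci F" "A \<in> minimal_sets F" "B \<in> minimal_sets F" "x \<in> A" "x \<in> B"
  shows "A = B"
  using assms unfolding monomial_ci_def pairwise_def disjnt_def by blast

lemma minimal_sets_subst_one_of_mem:
  assumes "clutter E" "A \<in> E" "y \<in> A"
  shows "A - {y} \<in> minimal_sets (subst_one E y)"
proof -
  have "\<not> B - {y} \<subset> A - {y}" if "B \<in> E" for B
  proof
    assume "B - {y} \<subset> A - {y}"
    with \<open>y \<in> A\<close> have "B \<subset> A" by blast
    with assms(1,2) \<open>B \<in> E\<close> show False unfolding clutter_def by blast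
  qed
  with \<open>A \<in> E\<close> show ?thesis unfolding minimal_sets_def subst_one_def by blast
qed

lemma minimal_sets_subst_one_of_not_mem:
  assumes "clutter E" "A \<in> E" "y \<notin> A"
    and no_shrink: "\<And>B. B \<in> E \<Longrightarrow> y \<in> B \<Longrightarrow> \<not> B - {y} \<subset> A"
  shows "A \<in> minimal_sets (subst_one E y)"
proof -
  have "\<not> B - {y} \<subset> A" if "B \<in> E" for B
  proof (cases "y \<in> B")
    case False
    with assms(1,2) \<open>B \<in> E\<close> show ?thesis unfolding clutter_def by auto
  qed (use no_shrink \<open>B \<in> E\<close> in blast)
  moreover have "A = A - {y}" using \<open>y \<notin> A\<close> by simp
  ultimately show ?thesis
    using \<open>A \<in> E\<close> unfolding minimal_sets_def subst_one_def by auto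
qed

lemma minimal_sets_subst_one_edge:
  assumes simple: "simple_hypergraph V E" and "{x, w} \<in> E"
    and "{x, y} \<notin> E" "{y, w} \<notin> E" "y \<notin> {x, w}"
  shows "{x, w} \<in> minimal_sets (subst_one E y)"
proof (rule minimal_sets_subst_one_of_not_mem)
  show "\<not> B - {y} \<subset> {x, w}" if "B \<in> E" "y \<in> B" for B
  proof
    assume "B - {y} \<subset> {x, w}"
    then have "B \<subseteq> {x, y} \<or> B \<subseteq> {y, w}" by blast
    moreover have "card B \<ge> 2" using simple_hypergraph_card_edge[OF simple \<open>B \<in> E\<close>] .
    ultimately have "B = {x, y} \<or> B = {y, w}"
      using card_ge_two_subset_pair_eq[of B x y] card_ge_two_subset_pair_eq[of B y w] by blast
    with assms(3,4) \<open>B \<in> E\<close> show False by blast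
  qed
qed (use assms(2,5) simple_hypergraph_clutter[OF simple] in auto)

lemma nbrs_subset_nbrs_in_hyperedge:
  assumes H: "NCI_hypergraph V E" and "e \<in> E" "card e \<ge> 3"
    and "x \<in> e" "y \<in> e" "x \<noteq> y"
  shows "nbrs E x \<subseteq> nbrs E y"
proof
  fix w assume "w \<in> nbrs E x"
  then have xw: "{x, w} \<in> E" by (simp add: nbrs_def)
  show "w \<in> nbrs E y"
  proof (rule ccontr)
    assume "w \<notin> nbrs E y"
    then have yw: "{y, w} \<notin> E" by (simp add: nbrs_def)
    have simple: "simple_hypergraph V E" and nci: "nearly_ci E"
      using H by (simp_all add: NCI_hypergraph_def)
    note clutter = simple_hypergraph_clutter[OF simple]
    have pair_not_edge: "{a, b} \<notin> E" if "{a, b} \<subseteq> e" for a b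
      using clutter_smaller_subset_not_mem[OF clutter \<open>e \<in> E\<close> that]
        card_pair_le_two[of a b] \<open>card e \<ge> 3\<close> by linarith
    have "\<not> {x, w} \<subseteq> e" using pair_not_edge xw by blast
    with \<open>x \<in> e\<close> \<open>y \<in> e\<close> \<open>x \<noteq> y\<close> have "w \<notin> e" "y \<notin> {x, w}" by auto
    have "{x, y} \<notin> E" using pair_not_edge \<open>x \<in> e\<close> \<open>y \<in> e\<close> by blast
    then have "{x, w} \<in> minimal_sets (subst_one E y)"
      by (rule minimal_sets_subst_one_edge[OF simple xw _ yw \<open>y \<notin> {x, w}\<close>])
    moreover have "e - {y} \<in> minimal_sets (subst_one E y)"
      using minimal_sets_subst_one_of_mem[OF clutter \<open>e \<in> E\<close> \<open>y \<in> e\<close>] .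
    moreover have "monomial_ci (subst_one E y)"
      using nci \<open>e \<in> E\<close> \<open>y \<in> e\<close> by (auto simp: nearly_ci_def ideal_support_def)
    ultimately have "e - {y} = {x, w}"
      using monomial_ci_minimal_sets_eq[of _ "e - {y}" "{x, w}" x] \<open>x \<in> e\<close> \<open>x \<noteq> y\<close>
      by blast
    with \<open>w \<notin> e\<close> show False by blast
  qed
qed

theorem lemma3p3:
  fixes V :: "'a set" and E :: "'a set set" and e :: "'a set"
  assumes "NCI_hypergraph V E"
    and "e \<in> E" and "card e \<ge> 3"
  shows "\<forall>x\<in>e. \<forall>y\<in>e. nbrs E x = nbrs E y"
proof (intro ballI)
  fix x y assume "x \<in> e" "y \<in> e"
  show "nbrs E x = nbrs E y"
  proof (cases "x = y")
    case False
    then show ?thesis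
      using nbrs_subset_nbrs_in_hyperedge[OF assms] \<open>x \<in> e\<close> \<open>y \<in> e\<close> by blast
  qed simp
qed

end
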